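(* Suppose that (G), (Q), (M1) and (M2) hold. Then every invariant probability measure $\pi$ of the Markov chain $\{X_t\}_{t\in\mathbb N}$ satisfies $\int_{\mathcal H}\|x\|_{\mathcal H}\,\pi(dx)<\infty$.
   Context: Let $D=[0,1]^d$, $\mathcal H=L^2(D)$ (real) with norm $\|\cdot\|_{\mathcal H}$; $\|\cdot\|_{\mathcal L}$ is the operator norm. On a filtered probability space consider the NFAR model $X_{t+1}=\Psi_0(X_t)+\xi_t$, $t\in\mathbb N$, with $\Psi_0:\mathcal H\to\mathcal H$ measurable, $(X_t)$ adapted, $\{\xi_t\}$ i.i.d. mean-zero $\mathcal H$-valued with $\xi_t$ $\mathcal F_{t+1}$-measurable and independent of $\mathcal F_t$; $Q$ is the (trace-class) covariance operator of $\xi_1$. Assumptions: (G) $\xi_t\sim\mathcal N(0,Q)$; (Q) $\overline{\mathrm{Im}(Q)}=\mathcal H$; (M1) $\Psi_0=Q\circ m_0$ for some measurable $m_0:\mathcal H\to\mathcal H$; (M2) there exist $c_1,c_2>0$ with $c_1\|Q\|_{\mathcal L}<1$ and $\|m_0(x)\|_{\mathcal H}\le c_1\|x\|_{\mathcal H}+c_2$ for all $x\in\mathcal H$. An invariant measure $\pi$ is a probability measure on $\mathcal H$ with $\int\mathbb P(X_2\in A\mid X_1=x)\pi(dx)=\pi(A)$ for all Borel $A$. *)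

theory Defs
  imports "HOL-Probability.Probability"
begin

definition real_normal_measure :: "real \<Rightarrow> real measure" where
  "real_normal_measure v =
     (if v = 0 then return borel 0 else density lborel (normal_density 0 (sqrt v)))"

definition gaussian_measure :: "'a::{real_inner,polish_space} measure \<Rightarrow> ('a \<Rightarrow>\<^sub>L 'a) \<Rightarrow> bool" where
  "gaussian_measure \<mu> Q \<longleftrightarrow> prob_space \<mu> \<and> sets \<mu> = sets borel \<and>
     (\<forall>h. distr \<mu> borel (\<lambda>x. h \<bullet> x) = real_normal_measure (blinfun_apply Q h \<bullet> h))"

definition orthonormal_basis :: "'a::real_inner set \<Rightarrow> bool" where
  "orthonormal_basis B \<longleftrightarrow> (\<forall>e\<in>B. norm e = 1) \<and> (\<forall>e\<in>B. \<forall>f\<in>B. e \<noteq> f \<longrightarrow> e \<bullet> f = 0)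
     \<and> closure (span B) = UNIV"

definition trace_class_covariance :: "('a::{real_inner,polish_space} \<Rightarrow>\<^sub>L 'a) \<Rightarrow> bool" where
  "trace_class_covariance Q \<longleftrightarrow>
     (\<forall>x y. blinfun_apply Q x \<bullet> y = x \<bullet> blinfun_apply Q y) \<and>
     (\<forall>x. 0 \<le> blinfun_apply Q x \<bullet> x) \<and>
     (\<exists>B. orthonormal_basis B \<and> (\<lambda>e. blinfun_apply Q e \<bullet> e) summable_on B)"

text \<open>Transition kernel of the NFAR chain X_{t+1} = \<Psi>(X_t) + \<xi>_t, evaluated at time 1:
  P(X_2 \<in> A | X_1 = x) = P(\<Psi> x + \<xi>_1 \<in> A), since \<xi>_1 is independent of F_1.\<close>

definition nfar_kernel :: "'w measure \<Rightarrow> (nat \<Rightarrow> 'w \<Rightarrow> 'a::real_normed_vector) \<Rightarrow> ('a \<Rightarrow> 'a) \<Rightarrow> 'a \<Rightarrow> 'a set \<Rightarrow> ennreal" where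
  "nfar_kernel M \<xi> \<Psi> x A = emeasure M {\<omega> \<in> space M. \<Psi> x + \<xi> 1 \<omega> \<in> A}"

definition invariant_measure :: "'w measure \<Rightarrow> (nat \<Rightarrow> 'w \<Rightarrow> 'a::{real_normed_vector}) \<Rightarrow> ('a \<Rightarrow> 'a) \<Rightarrow> 'a measure \<Rightarrow> bool" where
  "invariant_measure M \<xi> \<Psi> \<pi> \<longleftrightarrow> prob_space \<pi> \<and> sets \<pi> = sets borel \<and>
     (\<forall>A\<in>sets borel. (\<integral>\<^sup>+ x. nfar_kernel M \<xi> \<Psi> x A \<partial>\<pi>) = emeasure \<pi> A)"

end

theory Submission
  imports Defs
begin

text \<open>
  By (M1) and (M2) the drift satisfies \<open>\<parallel>\<Psi>0 x\<parallel> \<le> a \<parallel>x\<parallel> + b\<close> with \<open>a = c1 \<parallel>Q\<parallel> < 1\<close>,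
  and Gaussian noise with trace-class covariance has \<open>E \<parallel>\<xi>\<parallel>\<^sup>2 \<le> tr Q < \<infinity>\<close> (Parseval
  inequality in an orthonormal basis), hence a finite first moment \<open>E\<close>. Integrating
  \<open>\<parallel>\<Psi>0 x + \<xi>\<parallel> \<le> a \<parallel>x\<parallel> + b + \<parallel>\<xi>\<parallel>\<close> against an invariant measure \<open>\<pi>\<close> formally gives
  \<open>(1 - a) \<integral> \<parallel>x\<parallel> d\<pi> \<le> b + E\<close>. Since \<open>\<integral> \<parallel>x\<parallel> d\<pi>\<close> may a priori be infinite, the argument is
  run with \<open>\<parallel>x\<parallel>\<close> truncated at level \<open>K\<close>, where every term is finite and can be
  cancelled, and then \<open>K \<rightarrow> \<infinity>\<close> by monotone convergence.
\<close>

lemma orthonormal_basis_countable: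
  fixes B :: "'a::{real_inner,polish_space} set"
  assumes "orthonormal_basis B"
  shows "countable B"
proof -
  have far: "1 \<le> dist a b" if "a \<in> B" "b \<in> B" "a \<noteq> b" for a b
  proof -
    have "a \<bullet> a = 1" "b \<bullet> b = 1" "a \<bullet> b = 0"
      using assms that unfolding orthonormal_basis_def by (auto simp: norm_eq_1)
    then have "dist a b ^ 2 = 2"
      by (simp add: dist_norm power2_norm_eq_inner inner_diff_left inner_diff_right inner_commute)
    then show ?thesis
      by (metis abs_of_nonneg zero_le_dist one_le_numeral real_sqrt_abs real_sqrt_ge_one)
  qed
  have disjoint: "pairwise disjnt ((\<lambda>e. ball e (1/2)) ` B)"
  proof (rule pairwise_imageI)
    fix a b assume "a \<in> B" "b \<in> B" "a \<noteq> b"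
    then show "disjnt (ball a (1/2)) (ball b (1/2))"
      using far[of a b] dist_triangle_half_r[of _ a 1 b]
      by (fastforce simp: disjnt_def dist_commute)
  qed
  have "inj_on (\<lambda>e. ball e (1/2)) B"
  proof (rule inj_onI)
    fix a b assume "a \<in> B" "b \<in> B" "ball a (1/2) = ball b (1/2)"
    then show "a = b"
      using far[of a b] centre_in_ball[of a "1/2"] by (force simp: dist_commute)
  qed
  moreover have "countable ((\<lambda>e. ball e (1/2)) ` B)"
    using disjoint by (intro countable_disjoint_open_subsets) auto
  ultimately show ?thesis
    by (blast intro: countable_image_inj_on)
qed

lemma norm_square_le_orthonormal_sum:
  fixes x y :: "'a::real_inner"
  assumes T: "finite T" "\<And>a. a \<in> T \<Longrightarrow> norm a = 1" "pairwise orthogonal T"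
    and y: "y \<in> span T"
  shows "norm x ^ 2 \<le> (\<Sum>a\<in>T. (a \<bullet> x) ^ 2) + norm (x - y) ^ 2"
proof -
  define p where "p = (\<Sum>a\<in>T. (a \<bullet> x) *\<^sub>R a)"
  have "a \<bullet> p = a \<bullet> x" if "a \<in> T" for a
  proof -
    have "a \<bullet> p = (\<Sum>b\<in>T. if b = a then a \<bullet> x else 0)"
      unfolding p_def inner_sum_right using T(2,3) that
      by (intro sum.cong) (auto simp: pairwise_def orthogonal_def norm_eq_1)
    then show ?thesis
      using T(1) that by simp
  qed
  then have "orthogonal (x - p) a" if "a \<in> T" for a
    using that by (simp add: orthogonal_def inner_diff_right inner_commute[of _ a])
  then have ortho_span: "orthogonal (x - p) z" if "z \<in> span T" for z
    using that by (blast intro: orthogonal_to_span)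
  have "norm p ^ 2 = (\<Sum>a\<in>T. (a \<bullet> x) ^ 2)"
    unfolding p_def using T
    by (subst norm_sum_Pythagorean) (auto simp: pairwise_def orthogonal_clauses)
  moreover have "norm x ^ 2 = norm (x - p) ^ 2 + norm p ^ 2"
    using norm_add_Pythagorean[OF ortho_span[of p]]
    by (simp add: p_def span_sum span_scale span_base)
  moreover have "norm (x - y) ^ 2 = norm (x - p) ^ 2 + norm (p - y) ^ 2"
    using norm_add_Pythagorean[OF ortho_span[of "p - y"]]
    by (simp add: p_def span_diff span_sum span_scale span_base y)
  ultimately show ?thesis
    by simp
qed

lemma orthonormal_basis_norm_square_le:
  fixes x :: "'a::real_inner"
  assumes B: "orthonormal_basis B"
  shows "ennreal (norm x ^ 2) \<le> (\<integral>\<^sup>+a. ennreal ((a \<bullet> x) ^ 2) \<partial>count_space B)"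
proof (rule ennreal_le_epsilon)
  fix e :: real assume "e > 0"
  have "x \<in> closure (span B)"
    using B by (simp add: orthonormal_basis_def)
  then obtain y where "y \<in> span B" "dist y x < sqrt e"
    using \<open>e > 0\<close> by (meson closure_approachable real_sqrt_gt_0_iff)
  then obtain T u where T: "finite T" "T \<subseteq> B" "y = (\<Sum>a\<in>T. u a *\<^sub>R a)"
    unfolding span_explicit by blast
  have "y \<in> span T"
    unfolding T(3) by (intro span_sum span_scale span_base)
  have "norm (x - y) ^ 2 \<le> e"
    using \<open>dist y x < sqrt e\<close> \<open>e > 0\<close>
    by (metis dist_norm norm_minus_commute norm_ge_zero real_sqrt_le_iff real_sqrt_pow2
        less_imp_le power2_le_iff_abs_le abs_of_nonneg real_sqrt_ge_zero)
  moreover have "norm x ^ 2 \<le> (\<Sum>a\<in>T. (a \<bullet> x) ^ 2) + norm (x - y) ^ 2"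
    using B T(1,2) \<open>y \<in> span T\<close> by (intro norm_square_le_orthonormal_sum)
      (auto simp: orthonormal_basis_def pairwise_def orthogonal_def subset_eq)
  ultimately have "ennreal (norm x ^ 2) \<le> ennreal (\<Sum>a\<in>T. (a \<bullet> x) ^ 2) + ennreal e"
    using \<open>e > 0\<close> by (subst ennreal_plus[symmetric]) (auto intro!: ennreal_leI sum_nonneg)
  also have "ennreal (\<Sum>a\<in>T. (a \<bullet> x) ^ 2) = (\<integral>\<^sup>+a. ennreal ((a \<bullet> x) ^ 2) * indicator T a \<partial>count_space B)"
    using T by (subst nn_integral_count_space'[of T]) (auto simp: sum_ennreal)
  also have "\<dots> \<le> (\<integral>\<^sup>+a. ennreal ((a \<bullet> x) ^ 2) \<partial>count_space B)"
    by (intro nn_integral_mono) (simp add: indicator_def)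
  finally show "ennreal (norm x ^ 2) \<le> (\<integral>\<^sup>+a. ennreal ((a \<bullet> x) ^ 2) \<partial>count_space B) + ennreal e"
    by (simp add: add_right_mono)
qed

lemma nn_integral_real_normal_measure_square:
  assumes "v \<ge> 0"
  shows "(\<integral>\<^sup>+t. ennreal (t ^ 2) \<partial>real_normal_measure v) = ennreal v"
proof (cases "v = 0")
  case True
  then show ?thesis
    by (simp add: real_normal_measure_def nn_integral_return)
next
  case False
  with assms have "v > 0"
    by simp
  have "(\<integral>\<^sup>+t. ennreal (t ^ 2) \<partial>real_normal_measure v) =
        (\<integral>\<^sup>+t. ennreal (normal_density 0 (sqrt v) t * (t - 0) ^ (2 * 1)) \<partial>lborel)"
    using False by (simp add: real_normal_measure_def nn_integral_density ennreal_mult'[symmetric])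
  also have "\<dots> = ennreal (\<integral>t. normal_density 0 (sqrt v) t * (t - 0) ^ (2 * 1) \<partial>lborel)"
    using \<open>v > 0\<close> by (intro nn_integral_eq_integral integrable_normal_moment) auto
  also have "\<dots> = ennreal v"
    using \<open>v > 0\<close> by (subst integral_normal_moment_even) auto
  finally show ?thesis .
qed

lemma gaussian_measure_nn_integral_inner_square:
  assumes "gaussian_measure \<mu> Q" "0 \<le> Q h \<bullet> h"
  shows "(\<integral>\<^sup>+x. ennreal ((h \<bullet> x) ^ 2) \<partial>\<mu>) = ennreal (Q h \<bullet> h)"
proof -
  have "sets \<mu> = sets borel"
    using assms(1) by (simp add: gaussian_measure_def)
  then have "(\<lambda>x. h \<bullet> x) \<in> measurable \<mu> borel"
    by (simp cong: measurable_cong_sets)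
  then have "(\<integral>\<^sup>+x. ennreal ((h \<bullet> x) ^ 2) \<partial>\<mu>) = (\<integral>\<^sup>+t. ennreal (t ^ 2) \<partial>distr \<mu> borel (\<lambda>x. h \<bullet> x))"
    by (simp add: nn_integral_distr)
  also have "\<dots> = ennreal (Q h \<bullet> h)"
    using assms by (simp add: gaussian_measure_def nn_integral_real_normal_measure_square)
  finally show ?thesis .
qed

lemma nn_integral_count_space_summable_on:
  fixes f :: "'a \<Rightarrow> real"
  assumes "f summable_on A" "\<And>x. x \<in> A \<Longrightarrow> 0 \<le> f x"
  shows "(\<integral>\<^sup>+x. ennreal (f x) \<partial>count_space A) = ennreal (infsum f A)"
proof -
  have abs_summable: "Infinite_Set_Sum.abs_summable_on f A"
    using assms(1) summable_on_iff_abs_summable_on_real abs_summable_equivalent by blast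
  then have "(\<integral>\<^sup>+x. ennreal (f x) \<partial>count_space A) = ennreal (infsetsum f A)"
    using assms(2) by (rule nn_integral_conv_infsetsum)
  also have "infsetsum f A = infsum f A"
    using abs_summable by (rule infsetsum_infsum)
  finally show ?thesis .
qed

lemma gaussian_measure_nn_integral_norm_square_finite:
  fixes \<mu> :: "'a::{real_inner,polish_space} measure"
  assumes \<mu>: "gaussian_measure \<mu> Q" and Q: "trace_class_covariance Q"
  shows "(\<integral>\<^sup>+x. ennreal (norm x ^ 2) \<partial>\<mu>) < \<infinity>"
proof -
  have Q_nonneg: "0 \<le> Q h \<bullet> h" for h
    using Q unfolding trace_class_covariance_def by blast
  obtain B where B: "orthonormal_basis B" and summable: "(\<lambda>a. Q a \<bullet> a) summable_on B"
    using Q by (auto simp: trace_class_covariance_def)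
  have "sets \<mu> = sets borel"
    using \<mu> by (simp add: gaussian_measure_def)
  then have meas: "(\<lambda>x. ennreal ((a \<bullet> x) ^ 2)) \<in> borel_measurable \<mu>" for a
    by (simp cong: measurable_cong_sets)
  have "(\<integral>\<^sup>+x. ennreal (norm x ^ 2) \<partial>\<mu>) \<le> (\<integral>\<^sup>+x. \<integral>\<^sup>+a. ennreal ((a \<bullet> x) ^ 2) \<partial>count_space B \<partial>\<mu>)"
    using B by (intro nn_integral_mono orthonormal_basis_norm_square_le)
  also have "\<dots> = (\<integral>\<^sup>+a. \<integral>\<^sup>+x. ennreal ((a \<bullet> x) ^ 2) \<partial>\<mu> \<partial>count_space B)"
    by (intro nn_integral_count_space_nn_integral orthonormal_basis_countable B meas)
  also have "\<dots> = (\<integral>\<^sup>+a. ennreal (Q a \<bullet> a) \<partial>count_space B)"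
    by (intro nn_integral_cong gaussian_measure_nn_integral_inner_square \<mu> Q_nonneg)
  also have "\<dots> = ennreal (infsum (\<lambda>a. Q a \<bullet> a) B)"
    using summable Q_nonneg by (intro nn_integral_count_space_summable_on)
  finally show ?thesis
    by (rule le_less_trans) simp
qed

lemma gaussian_measure_nn_integral_norm_finite:
  fixes \<mu> :: "'a::{real_inner,polish_space} measure"
  assumes \<mu>: "gaussian_measure \<mu> Q" and Q: "trace_class_covariance Q"
  shows "(\<integral>\<^sup>+x. norm x \<partial>\<mu>) < \<infinity>"
proof -
  interpret prob_space \<mu>
    using \<mu> by (simp add: gaussian_measure_def)
  have [measurable_cong]: "sets \<mu> = sets borel"
    using \<mu> by (simp add: gaussian_measure_def)
  have "(\<integral>\<^sup>+x. norm x \<partial>\<mu>) \<le> (\<integral>\<^sup>+x. 1 + ennreal (norm x ^ 2) \<partial>\<mu>)"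
  proof (intro nn_integral_mono)
    fix x :: 'a
    have "0 \<le> (norm x - 1) ^ 2"
      by simp
    then have "norm x \<le> 1 + norm x ^ 2"
      using norm_ge_zero[of x] unfolding power2_diff power_one by linarith
    then have "ennreal (norm x) \<le> ennreal (1 + norm x ^ 2)"
      by (rule ennreal_leI)
    then show "ennreal (norm x) \<le> 1 + ennreal (norm x ^ 2)"
      by simp
  qed
  also have "\<dots> = 1 + (\<integral>\<^sup>+x. norm x ^ 2 \<partial>\<mu>)"
    by (subst nn_integral_add) (auto simp: emeasure_space_1)
  also have "\<dots> < \<infinity>"
    using gaussian_measure_nn_integral_norm_square_finite[OF \<mu> Q] by simp
  finally show ?thesis .
qed

lemma invariant_measure_nn_integral:
  fixes \<xi> :: "nat \<Rightarrow> 'w \<Rightarrow> 'a::{real_normed_vector,second_countable_topology}"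
  assumes "prob_space M" and [measurable]: "\<xi> 1 \<in> borel_measurable M" "\<Psi> \<in> borel_measurable borel"
    and inv: "invariant_measure M \<xi> \<Psi> \<pi>" and [measurable]: "f \<in> borel_measurable borel"
  shows "(\<integral>\<^sup>+y. f y \<partial>\<pi>) = (\<integral>\<^sup>+x. \<integral>\<^sup>+\<omega>. f (\<Psi> x + \<xi> 1 \<omega>) \<partial>M \<partial>\<pi>)"
proof -
  interpret M: prob_space M by fact
  have sets_\<pi>: "sets \<pi> = sets borel"
    using inv by (simp add: invariant_measure_def)
  then have [measurable_cong]: "sets \<pi> = sets borel" and "space \<pi> = UNIV"
    using sets_eq_imp_space_eq by force+
  define step where "step p = \<Psi> (fst p) + \<xi> 1 (snd p)" for p
  have [measurable]: "step \<in> borel_measurable (\<pi> \<Otimes>\<^sub>M M)"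
    unfolding step_def by measurable
  have "distr (\<pi> \<Otimes>\<^sub>M M) borel step = \<pi>"
  proof (rule measure_eqI)
    fix A assume "A \<in> sets (distr (\<pi> \<Otimes>\<^sub>M M) borel step)"
    then have [measurable]: "A \<in> sets borel"
      by simp
    have "emeasure (distr (\<pi> \<Otimes>\<^sub>M M) borel step) A
        = emeasure (\<pi> \<Otimes>\<^sub>M M) (step -` A \<inter> space (\<pi> \<Otimes>\<^sub>M M))"
      by (simp add: emeasure_distr)
    also have "\<dots> = (\<integral>\<^sup>+x. emeasure M (Pair x -` (step -` A \<inter> space (\<pi> \<Otimes>\<^sub>M M))) \<partial>\<pi>)"
      by (intro M.emeasure_pair_measure_alt) measurable
    also have "\<dots> = (\<integral>\<^sup>+x. nfar_kernel M \<xi> \<Psi> x A \<partial>\<pi>)"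
      using \<open>space \<pi> = UNIV\<close> unfolding nfar_kernel_def
      by (intro nn_integral_cong arg_cong2[where f=emeasure]) (auto simp: step_def space_pair_measure)
    also have "\<dots> = emeasure \<pi> A"
      using inv by (simp add: invariant_measure_def)
    finally show "emeasure (distr (\<pi> \<Otimes>\<^sub>M M) borel step) A = emeasure \<pi> A" .
  qed (simp add: sets_\<pi>)
  then have "(\<integral>\<^sup>+y. f y \<partial>\<pi>) = (\<integral>\<^sup>+y. f y \<partial>distr (\<pi> \<Otimes>\<^sub>M M) borel step)"
    by simp
  also have "\<dots> = (\<integral>\<^sup>+p. f (step p) \<partial>(\<pi> \<Otimes>\<^sub>M M))"
    by (rule nn_integral_distr) measurable
  also have "\<dots> = (\<integral>\<^sup>+x. \<integral>\<^sup>+\<omega>. f (step (x, \<omega>)) \<partial>M \<partial>\<pi>)"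
    by (rule M.nn_integral_fst[symmetric]) measurable
  finally show ?thesis
    by (simp add: step_def)
qed

lemma truncated_drift_le:
  fixes s u \<eta> K a b :: real
  assumes "s \<le> a * u + b + \<eta>" "0 \<le> b" "0 \<le> \<eta>"
  shows "min s K + (1 - a) * (if u \<le> K then u else 0) \<le> min u K + b + \<eta>"
  using assms by (cases "u \<le> K") (auto simp: algebra_simps min_def)

context
  fixes M :: "'w measure" and \<xi> :: "nat \<Rightarrow> 'w \<Rightarrow> 'a::{real_normed_vector,second_countable_topology}"
    and \<Psi> :: "'a \<Rightarrow> 'a" and \<pi> :: "'a measure" and a b :: real
  assumes M: "prob_space M" and \<xi>_measurable[measurable]: "\<xi> 1 \<in> borel_measurable M"
    and \<Psi>_measurable[measurable]: "\<Psi> \<in> borel_measurable borel"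
    and inv: "invariant_measure M \<xi> \<Psi> \<pi>"
    and drift: "\<And>x. norm (\<Psi> x) \<le> a * norm x + b" and "a < 1" "0 \<le> b"
begin

lemma invariant_measure_truncated_norm_le:
  assumes "0 \<le> K"
  shows "(\<integral>\<^sup>+x. ennreal ((1 - a) * (if norm x \<le> K then norm x else 0)) \<partial>\<pi>)
    \<le> ennreal b + (\<integral>\<^sup>+\<omega>. norm (\<xi> 1 \<omega>) \<partial>M)"
proof -
  interpret M: prob_space M by (rule M)
  interpret \<pi>: prob_space \<pi>
    using inv by (simp add: invariant_measure_def)
  have [measurable_cong]: "sets \<pi> = sets borel"
    using inv by (simp add: invariant_measure_def)
  define E where "E = (\<integral>\<^sup>+\<omega>. norm (\<xi> 1 \<omega>) \<partial>M)"
  define f where "f y = ennreal (min (norm y) K)" for y :: 'a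
  define c where "c x = ennreal ((1 - a) * (if norm x \<le> K then norm x else 0))" for x :: 'a
  have [measurable]: "f \<in> borel_measurable borel" "c \<in> borel_measurable borel"
    unfolding f_def c_def by measurable
  have "(\<lambda>\<omega>. ennreal (norm (\<xi> 1 \<omega>))) \<in> borel_measurable M"
    by measurable
  have pointwise: "(\<integral>\<^sup>+\<omega>. f (\<Psi> x + \<xi> 1 \<omega>) \<partial>M) + c x \<le> f x + ennreal b + E" for x
  proof -
    have "(\<lambda>\<omega>. f (\<Psi> x + \<xi> 1 \<omega>)) \<in> borel_measurable M"
      by measurable
    then have "(\<integral>\<^sup>+\<omega>. f (\<Psi> x + \<xi> 1 \<omega>) \<partial>M) + c x = (\<integral>\<^sup>+\<omega>. f (\<Psi> x + \<xi> 1 \<omega>) + c x \<partial>M)"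
      by (simp add: nn_integral_add M.emeasure_space_1)
    also have "\<dots> \<le> (\<integral>\<^sup>+\<omega>. ennreal (min (norm x) K + b) + ennreal (norm (\<xi> 1 \<omega>)) \<partial>M)"
    proof (intro nn_integral_mono)
      fix \<omega>
      have "norm (\<Psi> x + \<xi> 1 \<omega>) \<le> a * norm x + b + norm (\<xi> 1 \<omega>)"
        using drift[of x] norm_triangle_ineq[of "\<Psi> x" "\<xi> 1 \<omega>"] by linarith
      then show "f (\<Psi> x + \<xi> 1 \<omega>) + c x \<le> ennreal (min (norm x) K + b) + ennreal (norm (\<xi> 1 \<omega>))"
        using truncated_drift_le[of _ a "norm x" b "norm (\<xi> 1 \<omega>)" K] \<open>a < 1\<close> \<open>0 \<le> b\<close> \<open>0 \<le> K\<close>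
        by (auto simp: f_def c_def simp flip: ennreal_plus intro!: ennreal_leI)
    qed
    also have "\<dots> = f x + ennreal b + E"
      using \<open>0 \<le> b\<close> \<open>0 \<le> K\<close> \<open>(\<lambda>\<omega>. ennreal (norm (\<xi> 1 \<omega>))) \<in> borel_measurable M\<close>
      by (simp add: nn_integral_add E_def f_def M.emeasure_space_1 ennreal_plus)
    finally show ?thesis .
  qed
  have "(\<integral>\<^sup>+y. f y \<partial>\<pi>) \<le> (\<integral>\<^sup>+y. ennreal K \<partial>\<pi>)"
    by (intro nn_integral_mono) (simp add: f_def ennreal_leI)
  then have f_finite: "(\<integral>\<^sup>+y. f y \<partial>\<pi>) \<noteq> \<infinity>"
    by (auto simp: \<pi>.emeasure_space_1 top_unique)
  \<comment> \<open>Invariance moves \<open>f\<close> one step along the chain; \<open>f_finite\<close> allows cancelling it.\<close>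
  have "(\<integral>\<^sup>+y. f y \<partial>\<pi>) + (\<integral>\<^sup>+x. c x \<partial>\<pi>)
      = (\<integral>\<^sup>+x. (\<integral>\<^sup>+\<omega>. f (\<Psi> x + \<xi> 1 \<omega>) \<partial>M) + c x \<partial>\<pi>)"
    unfolding invariant_measure_nn_integral[OF M \<xi>_measurable \<Psi>_measurable inv \<open>f \<in> _\<close>]
    by (rule nn_integral_add[symmetric]) measurable
  also have "\<dots> \<le> (\<integral>\<^sup>+x. f x + (ennreal b + E) \<partial>\<pi>)"
    using pointwise by (intro nn_integral_mono) (simp add: add.assoc)
  also have "\<dots> = (\<integral>\<^sup>+y. f y \<partial>\<pi>) + (ennreal b + E)"
    by (subst nn_integral_add) (auto simp: \<pi>.emeasure_space_1)
  finally show ?thesis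
    using f_finite by (simp add: c_def E_def ennreal_add_left_cancel_le)
qed

lemma invariant_measure_nn_integral_norm_le:
  "ennreal (1 - a) * (\<integral>\<^sup>+x. norm x \<partial>\<pi>) \<le> ennreal b + (\<integral>\<^sup>+\<omega>. norm (\<xi> 1 \<omega>) \<partial>M)"
proof -
  have [measurable_cong]: "sets \<pi> = sets borel"
    using inv by (simp add: invariant_measure_def)
  define c where "c n x = ennreal ((1 - a) * (if norm x \<le> real n then norm x else 0))" for n :: nat and x :: 'a
  have "incseq c"
    using \<open>a < 1\<close> by (auto simp: incseq_def le_fun_def c_def intro!: ennreal_leI mult_left_mono)
  have "(\<lambda>x. ennreal ((1 - a) * norm x)) = (\<lambda>x. SUP n. c n x)"
  proof
    fix x :: 'a
    obtain n :: nat where "norm x \<le> real n"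
      using real_arch_simple by blast
    then have "c n x = ennreal ((1 - a) * norm x)"
      by (simp add: c_def)
    moreover have "c m x \<le> ennreal ((1 - a) * norm x)" for m
      using \<open>a < 1\<close> by (auto simp: c_def intro: ennreal_leI)
    ultimately show "ennreal ((1 - a) * norm x) = (SUP n. c n x)"
      by (metis (mono_tags, lifting) SUP_eqI SUP_upper UNIV_I antisym)
  qed
  then have "ennreal (1 - a) * (\<integral>\<^sup>+x. norm x \<partial>\<pi>) = (\<integral>\<^sup>+x. (SUP n. c n x) \<partial>\<pi>)"
    using \<open>a < 1\<close> by (simp add: nn_integral_cmult[symmetric] ennreal_mult fun_eq_iff)
  also have "\<dots> = (SUP n. \<integral>\<^sup>+x. c n x \<partial>\<pi>)"
    using \<open>incseq c\<close> by (rule nn_integral_monotone_convergence_SUP) (unfold c_def, measurable)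
  also have "\<dots> \<le> ennreal b + (\<integral>\<^sup>+\<omega>. norm (\<xi> 1 \<omega>) \<partial>M)"
    unfolding c_def by (intro SUP_least invariant_measure_truncated_norm_le) simp
  finally show ?thesis .
qed

end

theorem lemmaA3:
  fixes M :: "'w measure"
    and \<xi> :: "nat \<Rightarrow> 'w \<Rightarrow> 'a::{real_inner,polish_space}"
    and Q :: "'a \<Rightarrow>\<^sub>L 'a"
    and \<Psi>0 m0 :: "'a \<Rightarrow> 'a"
    and c1 c2 :: real
    and \<pi> :: "'a measure"
  assumes "prob_space M"
    and "\<And>t. \<xi> t \<in> borel_measurable M"
    and "prob_space.indep_vars M (\<lambda>_. borel) \<xi> UNIV"
    and "trace_class_covariance Q"
    and G: "\<And>t. gaussian_measure (distr M borel (\<xi> t)) Q"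
    and Qdense: "closure (range (blinfun_apply Q)) = UNIV"
    and M1: "m0 \<in> borel_measurable borel" "\<Psi>0 = blinfun_apply Q \<circ> m0"
    and M2: "c1 > 0" "c2 > 0" "c1 * norm Q < 1" "\<And>x. norm (m0 x) \<le> c1 * norm x + c2"
    and inv: "invariant_measure M \<xi> \<Psi>0 \<pi>"
  shows "(\<integral>\<^sup>+ x. ennreal (norm x) \<partial>\<pi>) < \<infinity>"
proof -
  have \<xi>_measurable[measurable]: "\<xi> 1 \<in> borel_measurable M"
    by fact
  have "\<Psi>0 \<in> borel_measurable borel"
    unfolding M1(2) using M1(1) blinfun.bounded_linear_right
    by (intro measurable_comp[OF _ borel_measurable_continuous_onI] linear_continuous_on)
  have drift: "norm (\<Psi>0 x) \<le> (norm Q * c1) * norm x + norm Q * c2" for x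
  proof -
    have "norm (\<Psi>0 x) \<le> norm Q * norm (m0 x)"
      unfolding M1(2) by (simp add: norm_blinfun)
    also have "\<dots> \<le> norm Q * (c1 * norm x + c2)"
      by (intro mult_left_mono M2(4)) auto
    finally show ?thesis
      by (simp add: algebra_simps)
  qed
  have "(\<integral>\<^sup>+\<omega>. norm (\<xi> 1 \<omega>) \<partial>M) = (\<integral>\<^sup>+x. norm x \<partial>distr M borel (\<xi> 1))"
    by (rule nn_integral_distr[symmetric]) measurable
  also have "\<dots> < \<infinity>"
    using G \<open>trace_class_covariance Q\<close> by (rule gaussian_measure_nn_integral_norm_finite)
  finally have noise_finite: "(\<integral>\<^sup>+\<omega>. norm (\<xi> 1 \<omega>) \<partial>M) < \<infinity>" .
  have "ennreal (1 - norm Q * c1) * (\<integral>\<^sup>+x. norm x \<partial>\<pi>)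
      \<le> ennreal (norm Q * c2) + (\<integral>\<^sup>+\<omega>. norm (\<xi> 1 \<omega>) \<partial>M)"
    using \<open>prob_space M\<close> \<xi>_measurable \<open>\<Psi>0 \<in> _\<close> inv drift M2
    by (intro invariant_measure_nn_integral_norm_le) (simp_all add: mult.commute)
  also have "\<dots> < \<infinity>"
    using noise_finite by simp
  finally show ?thesis
    using M2(3) by (auto simp: mult.commute ennreal_mult_less_top)
qed

end
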